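(* Let $H$ be a complex separable Hilbert space and let $S,T\in B(H)$ be normal Hilbert–Schmidt operators such that the product $ST$ is normal. Then $\|ST\|_2\le\|TS\|_2$.
   Context: $\|\cdot\|_2$ denotes the Hilbert–Schmidt norm, $\|Z\|_2=(\operatorname{tr}(Z^*Z))^{1/2}$, and $S,T$ belong to the Hilbert–Schmidt class (the norm ideal associated with $\|\cdot\|_2$). *)

theory Defs
  imports "HOL-Analysis.Analysis"
begin

text \<open>A complex separable Hilbert space is modelled (up to unitary equivalence) as
  l2(I) for a countable index type I (orthonormal basis indexed by I).  A bounded
  operator is represented by its matrix with respect to this basis, A i j = <A e_j, e_i>.\<close>

type_synonym 'i cmat = "'i \<Rightarrow> 'i \<Rightarrow> complex"

definition hilbert_schmidt :: "'i cmat \<Rightarrow> bool" where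
  "hilbert_schmidt A \<longleftrightarrow> (\<lambda>(i,j). (cmod (A i j))\<^sup>2) summable_on UNIV"

definition hs_norm :: "'i cmat \<Rightarrow> real" where
  "hs_norm A = sqrt (\<Sum>\<^sub>\<infinity>(i,j). (cmod (A i j))\<^sup>2)"

text \<open>Operator composition in matrix form (for Hilbert-Schmidt matrices the sums
  converge absolutely).\<close>
definition mcomp :: "'i cmat \<Rightarrow> 'i cmat \<Rightarrow> 'i cmat" where
  "mcomp A B = (\<lambda>i k. \<Sum>\<^sub>\<infinity>j. A i j * B j k)"

definition madj :: "'i cmat \<Rightarrow> 'i cmat" where
  "madj A = (\<lambda>i j. cnj (A j i))"

definition normal_op :: "'i cmat \<Rightarrow> bool" where
  "normal_op A \<longleftrightarrow> mcomp A (madj A) = mcomp (madj A) A"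

end

theory Submission
  imports Defs
begin

text \<open>Expanding the matrix entries, the squared Hilbert-Schmidt norm of AB is the trace
  tr(BB* A*A); the fourfold sum behind this is absolutely convergent by Cauchy-Schwarz,
  so the order of summation may be exchanged.  For normal S and T, cyclicity of the trace gives
  tr(TT* S*S) = tr(T*T SS*) = tr(SS* T*T), that is, the norms of ST and TS even coincide.\<close>

lemma abs_summable_on_Times_mult:
  fixes f g :: "_ \<Rightarrow> 'a::{real_normed_field, banach}"
  assumes "(\<lambda>x. norm (f x)) summable_on A" and "(\<lambda>y. norm (g y)) summable_on B"
  shows "(\<lambda>(x,y). norm (f x * g y)) summable_on A \<times> B"
proof -
  have "(\<lambda>x. norm (\<Sum>\<^sub>\<infinity>y\<in>B. norm (f x * g y))) summable_on A"
    using assms by (simp add: norm_mult infsum_cmult_right infsum_nonneg summable_on_cmult_left)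
  moreover have "(\<lambda>y. norm (f x * g y)) summable_on B" for x
    using assms(2) by (simp add: norm_mult summable_on_cmult_right)
  ultimately show ?thesis
    using Infinite_Sum.abs_summable_on_Sigma_iff[of "\<lambda>(x,y). f x * g y" A "\<lambda>_. B"]
    by (simp add: case_prod_unfold)
qed

lemma infsum_Times_mult:
  fixes f g :: "_ \<Rightarrow> 'a::{real_normed_field, banach}"
  assumes "(\<lambda>x. norm (f x)) summable_on A" and "(\<lambda>y. norm (g y)) summable_on B"
  shows "(\<Sum>\<^sub>\<infinity>(x,y)\<in>A \<times> B. f x * g y) = infsum f A * infsum g B"
proof -
  have "(\<lambda>(x,y). f x * g y) summable_on A \<times> B"
    using Infinite_Sum.abs_summable_summable[of "\<lambda>(x,y). f x * g y"]
      abs_summable_on_Times_mult[OF assms]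
    by (simp add: case_prod_unfold)
  then have "(\<Sum>\<^sub>\<infinity>(x,y)\<in>A \<times> B. f x * g y) = (\<Sum>\<^sub>\<infinity>x\<in>A. \<Sum>\<^sub>\<infinity>y\<in>B. f x * g y)"
    using infsum_Sigma'_banach[of "\<lambda>x y. f x * g y" A "\<lambda>_. B"] by simp
  also have "\<dots> = infsum f A * infsum g B"
    using assms[THEN Infinite_Sum.abs_summable_summable]
    by (simp add: infsum_cmult_left infsum_cmult_right)
  finally show ?thesis .
qed

lemma abs_summable_on_mult_of_square_summable:
  fixes f g :: "_ \<Rightarrow> 'a::{real_normed_div_algebra, banach, second_countable_topology}"
  assumes "(\<lambda>x. (norm (f x))\<^sup>2) summable_on A" and "(\<lambda>x. (norm (g x))\<^sup>2) summable_on A"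
  shows "(\<lambda>x. norm (f x * g x)) summable_on A"
proof (rule Infinite_Sum.abs_summable_product)
  show "(\<lambda>x. norm (f x * f x)) summable_on A" "(\<lambda>x. norm (g x * g x)) summable_on A"
    using assms by (simp_all add: norm_power flip: power2_eq_square)
qed

lemma infsum_norm_mult_square_le:
  fixes f g :: "_ \<Rightarrow> 'a::{real_normed_div_algebra, banach, second_countable_topology}"
  assumes f: "(\<lambda>x. (norm (f x))\<^sup>2) summable_on A" and g: "(\<lambda>x. (norm (g x))\<^sup>2) summable_on A"
  shows "(\<Sum>\<^sub>\<infinity>x\<in>A. norm (f x * g x))\<^sup>2
           \<le> (\<Sum>\<^sub>\<infinity>x\<in>A. (norm (f x))\<^sup>2) * (\<Sum>\<^sub>\<infinity>x\<in>A. (norm (g x))\<^sup>2)"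
    (is "?s\<^sup>2 \<le> ?F * ?G")
proof -
  have "?s \<le> sqrt (?F * ?G)"
  proof (rule infsum_le_finite_sums)
    show "(\<lambda>x. norm (f x * g x)) summable_on A"
      using abs_summable_on_mult_of_square_summable[OF f g] .
    fix X assume X: "finite X" "X \<subseteq> A"
    have "(\<Sum>x\<in>X. norm (f x) * norm (g x))\<^sup>2 \<le> (\<Sum>x\<in>X. (norm (f x))\<^sup>2) * (\<Sum>x\<in>X. (norm (g x))\<^sup>2)"
      by (rule Cauchy_Schwarz_ineq_sum)
    also have "\<dots> \<le> ?F * ?G"
      by (intro mult_mono finite_sum_le_infsum f g X sum_nonneg infsum_nonneg) auto
    finally show "(\<Sum>x\<in>X. norm (f x * g x)) \<le> sqrt (?F * ?G)"
      by (simp add: norm_mult real_le_rsqrt)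
  qed
  moreover have "0 \<le> ?s" by (simp add: infsum_nonneg)
  ultimately have "?s\<^sup>2 \<le> (sqrt (?F * ?G))\<^sup>2" by (rule power_mono)
  also have "\<dots> = ?F * ?G" by (simp add: infsum_nonneg)
  finally show ?thesis .
qed

lemma infsum_complex_of_real:
  "(\<Sum>\<^sub>\<infinity>x\<in>A. complex_of_real (f x)) = complex_of_real (infsum f A)"
proof (rule infsum_bounded_linear_strong)
  show "(\<lambda>x. complex_of_real (f x)) summable_on A \<longleftrightarrow> f summable_on A"
    by (rule summable_on_bounded_linear_iff[of _ Re])
       (auto intro: bounded_linear_of_real bounded_linear_Re)
qed (rule bounded_linear_of_real)

lemma hilbert_schmidt_transpose_iff: "hilbert_schmidt (\<lambda>j i. A i j) \<longleftrightarrow> hilbert_schmidt A"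
  unfolding hilbert_schmidt_def
  by (subst (2) UNIV_Times_UNIV[symmetric], subst summable_on_swap) simp

lemma hilbert_schmidt_row_summable:
  assumes "hilbert_schmidt A"
  shows "(\<lambda>j. (cmod (A i j))\<^sup>2) summable_on UNIV"
    and "(\<lambda>i. \<Sum>\<^sub>\<infinity>j. (cmod (A i j))\<^sup>2) summable_on UNIV"
proof -
  have "(\<lambda>(i,j). norm ((cmod (A i j))\<^sup>2)) summable_on UNIV \<times> UNIV"
    using assms unfolding hilbert_schmidt_def by simp
  then show "(\<lambda>j. (cmod (A i j))\<^sup>2) summable_on UNIV"
    and "(\<lambda>i. \<Sum>\<^sub>\<infinity>j. (cmod (A i j))\<^sup>2) summable_on UNIV"
    using Infinite_Sum.abs_summable_on_Sigma_iff[of "\<lambda>(i,j). (cmod (A i j))\<^sup>2" UNIV "\<lambda>_. UNIV"]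
    by (auto simp: case_prod_unfold infsum_nonneg)
qed

lemma hilbert_schmidt_column_summable:
  assumes "hilbert_schmidt A"
  shows "(\<lambda>i. (cmod (A i j))\<^sup>2) summable_on UNIV"
    and "(\<lambda>j. \<Sum>\<^sub>\<infinity>i. (cmod (A i j))\<^sup>2) summable_on UNIV"
  using hilbert_schmidt_row_summable[OF hilbert_schmidt_transpose_iff[THEN iffD2, OF assms]] .

lemma mcomp_entry_abs_summable:
  assumes "hilbert_schmidt A" and "hilbert_schmidt B"
  shows "(\<lambda>j. norm (A i j * B j k)) summable_on UNIV"
  using assms by (intro abs_summable_on_mult_of_square_summable
      hilbert_schmidt_row_summable hilbert_schmidt_column_summable)

lemma mcomp_abs_entries_square_summable:
  assumes A: "hilbert_schmidt A" and B: "hilbert_schmidt B"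
  shows "(\<lambda>(i,k). (\<Sum>\<^sub>\<infinity>j. norm (A i j * B j k))\<^sup>2) summable_on UNIV"
proof (rule summable_on_comparison_test)
  let ?r = "\<lambda>i. \<Sum>\<^sub>\<infinity>j. (cmod (A i j))\<^sup>2" and ?c = "\<lambda>k. \<Sum>\<^sub>\<infinity>j. (cmod (B j k))\<^sup>2"
  have "(\<lambda>(i,k). norm (?r i * ?c k)) summable_on UNIV \<times> UNIV"
    using hilbert_schmidt_row_summable(2)[OF A] hilbert_schmidt_column_summable(2)[OF B]
    by (intro abs_summable_on_Times_mult) (simp_all add: infsum_nonneg)
  then show "(\<lambda>(i,k). ?r i * ?c k) summable_on UNIV"
    using Infinite_Sum.abs_summable_summable[of "\<lambda>(i,k). ?r i * ?c k"] by (simp add: case_prod_unfold)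
  show "(\<lambda>(i,k). (\<Sum>\<^sub>\<infinity>j. norm (A i j * B j k))\<^sup>2) x \<le> (\<lambda>(i,k). ?r i * ?c k) x" for x
    using infsum_norm_mult_square_le[of "\<lambda>j. A (fst x) j" UNIV "\<lambda>j. B j (snd x)"]
      hilbert_schmidt_row_summable(1)[OF A] hilbert_schmidt_column_summable(1)[OF B]
    by (simp add: case_prod_unfold)
qed (simp add: case_prod_unfold)

lemma cmod_mcomp_square_expansion:
  assumes "hilbert_schmidt A" and "hilbert_schmidt B"
  shows "complex_of_real ((cmod (mcomp A B i k))\<^sup>2)
           = (\<Sum>\<^sub>\<infinity>(j,l). A i j * B j k * cnj (A i l * B l k))"
proof -
  have "complex_of_real ((cmod (mcomp A B i k))\<^sup>2) = mcomp A B i k * cnj (mcomp A B i k)"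
    by (rule complex_norm_square)
  also have "\<dots> = (\<Sum>\<^sub>\<infinity>j. A i j * B j k) * (\<Sum>\<^sub>\<infinity>l. cnj (A i l * B l k))"
    by (simp add: mcomp_def del: complex_cnj_mult)
  also have "\<dots> = (\<Sum>\<^sub>\<infinity>(j,l). A i j * B j k * cnj (A i l * B l k))"
    using mcomp_entry_abs_summable[OF assms, of i k]
    by (subst UNIV_Times_UNIV[symmetric], intro infsum_Times_mult[symmetric]) (simp_all add: norm_mult)
  finally show ?thesis .
qed

lemma mcomp_square_expansion_summable:
  assumes A: "hilbert_schmidt A" and B: "hilbert_schmidt B"
  shows "(\<lambda>((i,k),(j,l)). A i j * B j k * cnj (A i l * B l k)) summable_on UNIV"
proof -
  let ?F = "\<lambda>((i,k),(j,l)). A i j * B j k * cnj (A i l * B l k)"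
  have inner: "(\<Sum>\<^sub>\<infinity>(j,l). norm (A i j * B j k * cnj (A i l * B l k)))
                 = (\<Sum>\<^sub>\<infinity>j. norm (A i j * B j k))\<^sup>2" for i k
  proof -
    have "(\<Sum>\<^sub>\<infinity>(j,l)\<in>UNIV \<times> UNIV. norm (A i j * B j k) * norm (A i l * B l k))
            = (\<Sum>\<^sub>\<infinity>j. norm (A i j * B j k)) * (\<Sum>\<^sub>\<infinity>l. norm (A i l * B l k))"
      using mcomp_entry_abs_summable[OF A B] by (intro infsum_Times_mult) simp_all
    then show ?thesis by (simp add: norm_mult power2_eq_square mult_ac)
  qed
  have "(\<lambda>(j,l). norm (A i j * B j k * cnj (A i l * B l k))) summable_on UNIV" for i k
    using abs_summable_on_Times_mult[OF mcomp_entry_abs_summable[OF A B] mcomp_entry_abs_summable[OF A B],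
        of i k i k, unfolded UNIV_Times_UNIV]
    by (simp add: norm_mult case_prod_unfold)
  moreover have "(\<lambda>(i,k). norm (\<Sum>\<^sub>\<infinity>(j,l). norm (A i j * B j k * cnj (A i l * B l k)))) summable_on UNIV"
    using mcomp_abs_entries_square_summable[OF A B] by (simp add: inner del: complex_cnj_mult)
  ultimately have "(\<lambda>x. norm (?F x)) summable_on UNIV \<times> UNIV"
    using Infinite_Sum.abs_summable_on_Sigma_iff[of ?F UNIV "\<lambda>_. UNIV"]
    by (simp add: case_prod_unfold)
  then show ?thesis
    using summable_on_iff_abs_summable_on_complex[of ?F] by simp
qed

lemma mcomp_square_expansion_column_sum:
  assumes A: "hilbert_schmidt A" and B: "hilbert_schmidt B"
  shows "(\<Sum>\<^sub>\<infinity>(i,k). A i j * B j k * cnj (A i l * B l k))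
           = mcomp (madj A) A l j * mcomp B (madj B) j l"
proof -
  have "(\<Sum>\<^sub>\<infinity>(i,k). A i j * B j k * cnj (A i l * B l k))
          = (\<Sum>\<^sub>\<infinity>(i,k)\<in>UNIV \<times> UNIV. (cnj (A i l) * A i j) * (B j k * cnj (B l k)))"
    by (simp add: mult_ac)
  also have "\<dots> = (\<Sum>\<^sub>\<infinity>i. cnj (A i l) * A i j) * (\<Sum>\<^sub>\<infinity>k. B j k * cnj (B l k))"
    using hilbert_schmidt_column_summable(1)[OF A] hilbert_schmidt_row_summable(1)[OF B]
    by (intro infsum_Times_mult abs_summable_on_mult_of_square_summable) simp_all
  also have "\<dots> = mcomp (madj A) A l j * mcomp B (madj B) j l"
    by (simp add: mcomp_def madj_def)
  finally show ?thesis .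
qed

definition trace_mult :: "'i cmat \<Rightarrow> 'i cmat \<Rightarrow> complex" where
  "trace_mult P Q = (\<Sum>\<^sub>\<infinity>(j,l). P j l * Q l j)"

lemma trace_mult_commute: "trace_mult P Q = trace_mult Q P"
  unfolding trace_mult_def
  by (subst infsum_reindex_bij_betw[OF bij_swap, symmetric]) (simp add: case_prod_unfold mult.commute)

lemma hs_norm_nonneg: "hs_norm A \<ge> 0"
  unfolding hs_norm_def by (intro real_sqrt_ge_zero infsum_nonneg) auto

lemma hs_norm_mcomp_square:
  assumes A: "hilbert_schmidt A" and B: "hilbert_schmidt B"
  shows "complex_of_real ((hs_norm (mcomp A B))\<^sup>2) = trace_mult (mcomp B (madj B)) (mcomp (madj A) A)"
proof -
  have "(hs_norm (mcomp A B))\<^sup>2 = (\<Sum>\<^sub>\<infinity>(i,k). (cmod (mcomp A B i k))\<^sup>2)"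
    unfolding hs_norm_def by (intro real_sqrt_pow2 infsum_nonneg) auto
  then have "complex_of_real ((hs_norm (mcomp A B))\<^sup>2)
               = (\<Sum>\<^sub>\<infinity>x. complex_of_real ((\<lambda>(i,k). (cmod (mcomp A B i k))\<^sup>2) x))"
    by (simp only: infsum_complex_of_real)
  also have "\<dots> = (\<Sum>\<^sub>\<infinity>(i,k). \<Sum>\<^sub>\<infinity>(j,l). A i j * B j k * cnj (A i l * B l k))"
    by (simp only: case_prod_unfold cmod_mcomp_square_expansion[OF A B])
  also have "\<dots> = (\<Sum>\<^sub>\<infinity>(j,l). \<Sum>\<^sub>\<infinity>(i,k). A i j * B j k * cnj (A i l * B l k))"
    using infsum_swap_banach[of "\<lambda>(i,k) (j,l). A i j * B j k * cnj (A i l * B l k)" UNIV UNIV]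
      mcomp_square_expansion_summable[OF A B]
    by (simp add: case_prod_unfold)
  also have "\<dots> = trace_mult (mcomp B (madj B)) (mcomp (madj A) A)"
    by (simp add: mcomp_square_expansion_column_sum[OF A B] trace_mult_def mult.commute
        del: complex_cnj_mult)
  finally show ?thesis .
qed

lemma hs_norm_mcomp_commute_if_normal:
  assumes "hilbert_schmidt S" and "hilbert_schmidt T" and "normal_op S" and "normal_op T"
  shows "hs_norm (mcomp S T) = hs_norm (mcomp T S)"
proof -
  have "complex_of_real ((hs_norm (mcomp S T))\<^sup>2) = trace_mult (mcomp T (madj T)) (mcomp (madj S) S)"
    using assms(1,2) by (rule hs_norm_mcomp_square)
  also have "\<dots> = trace_mult (mcomp (madj T) T) (mcomp S (madj S))"
    using assms(3,4) by (simp add: normal_op_def)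
  also have "\<dots> = trace_mult (mcomp S (madj S)) (mcomp (madj T) T)"
    by (rule trace_mult_commute)
  also have "\<dots> = complex_of_real ((hs_norm (mcomp T S))\<^sup>2)"
    using assms(2,1) by (rule hs_norm_mcomp_square[symmetric])
  finally have "(hs_norm (mcomp S T))\<^sup>2 = (hs_norm (mcomp T S))\<^sup>2"
    by (simp only: of_real_eq_iff)
  then show ?thesis
    by (simp add: power2_eq_iff_nonneg hs_norm_nonneg)
qed

theorem mainTheorem6:
  fixes S T :: "'i::countable cmat"
  assumes "hilbert_schmidt S" and "hilbert_schmidt T"
    and "normal_op S" and "normal_op T"
    and "normal_op (mcomp S T)"
  shows "hs_norm (mcomp S T) \<le> hs_norm (mcomp T S)"
  using hs_norm_mcomp_commute_if_normal[OF assms(1-4)] by simp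

end
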